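(* Let $G=(V,E)$ be a graph on which LOCAL computation runs. Let $\Omega$ be a finite set with a probability distribution $\mu$. Let $\Phi:\Omega^V\to\mathbb R$, and let $\chi:V\to\{1,\dots,k\}$ be a vertex coloring of $G$ (not necessarily proper), known locally to each vertex. Suppose: - (A1) For any distinct $v,w\in V$ with $\chi(v)=\chi(w)$, $\Phi$ is uncorrelated for $v,w$. - (A2) For every vertex $v$ and all $u,u'\in\Omega$, the value $(D_{v,u,u'}\Phi)(x)$ is determined by $(x_w)_{w\in N[v]}$ and can be computed locally by $v$ from these values. Let $\vec R=(R_v)_{v\in V}$ have independent coordinates $R_v\sim\mu$. Then there is a deterministic LOCAL algorithm running in $O(k)$ rounds that determines values $\vec\rho\in\Omega^V$ (each vertex $v$ learning $\rho_v$) such that $\Phi(\vec\rho)\le\mathbf E[\Phi(\vec R)]$.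
   Context: **Inclusive neighbourhood.** $N[v]=\{v\}\cup\{w:(v,w)\in E\}$. **Derivatives.** For $v\in V$ and $u,u'\in\Omega$, the derivative $D_{v,u,u'}\Phi:\Omega^{V\setminus\{v\}}\to\mathbb R$ is given by $$(D_{v,u,u'}\Phi)(x)=\Phi(x,x_v=u)-\Phi(x,x_v=u'),$$ where $(x,x_v=u)$ is the vector that agrees with $x$ off $v$ and has value $u$ at $v$. **Uncorrelated.** $\Phi$ is uncorrelated for vertices $v,v'$ if for all $u,u'\in\Omega$, the function $D_{v,u,u'}\Phi(x)$ does not depend on $x_{v'}$. **LOCAL model on graphs.** In synchronous rounds, each vertex does unbounded computation and exchanges unbounded messages with its neighbours. Vertices may have additional locally held state on which $\Phi$ may depend. *)

theory Defs
  imports "HOL-Probability.Probability"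
begin

text \<open>Vertex set V = UNIV of a finite type 'v, value set Omega = UNIV of a finite type 'w.
  A graph is a relation E on vertices (symmetric, irreflexive).\<close>

definition nbhd :: "('v \<Rightarrow> 'v \<Rightarrow> bool) \<Rightarrow> 'v \<Rightarrow> 'v set" where
  "nbhd E v = insert v {w. E v w}"

text \<open>Derivative D_{v,u,u'} Phi, evaluated on a full configuration x (the value x v is ignored).\<close>
definition deriv_at :: "(('v \<Rightarrow> 'w) \<Rightarrow> real) \<Rightarrow> 'v \<Rightarrow> 'w \<Rightarrow> 'w \<Rightarrow> ('v \<Rightarrow> 'w) \<Rightarrow> real" where
  "deriv_at Phi v u u' x = Phi (x(v := u)) - Phi (x(v := u'))"

definition uncorrelated :: "(('v \<Rightarrow> 'w) \<Rightarrow> real) \<Rightarrow> 'v \<Rightarrow> 'v \<Rightarrow> bool" where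
  "uncorrelated Phi v v' \<longleftrightarrow>
     (\<forall>u u' x a. deriv_at Phi v u u' (x(v' := a)) = deriv_at Phi v u u' x)"

fun ball_of :: "('v \<Rightarrow> 'v \<Rightarrow> bool) \<Rightarrow> nat \<Rightarrow> 'v \<Rightarrow> 'v set" where
  "ball_of E 0 v = {v}"
| "ball_of E (Suc r) v = ball_of E r v \<union> {w. \<exists>u \<in> ball_of E r v. E u w}"

text \<open>A (deterministic) T-round LOCAL algorithm: it maps a graph E and local inputs inp
  to an output per vertex, and the output of v depends only on the radius-T view of v
  (local inputs of the vertices in the T-ball and the edges incident to them).\<close>
definition local_alg :: "nat \<Rightarrow> (('v \<Rightarrow> 'v \<Rightarrow> bool) \<Rightarrow> ('v \<Rightarrow> 'i) \<Rightarrow> 'v \<Rightarrow> 'o) \<Rightarrow> bool" where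
  "local_alg T A \<longleftrightarrow>
     (\<forall>E E' inp inp' v.
        (\<forall>u \<in> ball_of E T v. inp u = inp' u \<and> (\<forall>w. E u w = E' u w \<and> E w u = E' w u))
        \<longrightarrow> A E inp v = A E' inp' v)"

end

theory Submission
  imports Defs
begin

text \<open>Method of conditional expectations, one colour class per round.  In round n the vertices
  of colour n fix their values while all coordinates of larger colour stay random.  Since a colour
  class is pairwise uncorrelated, the change of \<open>Phi\<close> is the sum of the single-vertex
  derivatives, each evaluated at the old configuration; each of these depends only on the
  neighbourhood, so a vertex can choose its value to make its expected derivative at most its
  average over \<open>\<mu>\<close>.  Hence the expectation of \<open>Phi\<close> over the remaining randomness never
  increases, and after k rounds nothing random is left.\<close>

lemma integrable_measure_pmf_finite_type [simp]:
  fixes p :: "'a::finite pmf" and f :: "'a \<Rightarrow> real"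
  shows "integrable (measure_pmf p) f"
  by (simp add: integrable_measure_pmf_finite)

lemma expectation_bind_pmf_finite:
  fixes p :: "'a::finite pmf" and f :: "'a \<Rightarrow> 'b::finite pmf" and h :: "'b \<Rightarrow> real"
  shows "measure_pmf.expectation (bind_pmf p f) h
       = measure_pmf.expectation p (\<lambda>x. measure_pmf.expectation (f x) h)"
proof -
  have "measure_pmf.expectation (bind_pmf p f) h = (\<Sum>x\<in>UNIV. pmf p x *\<^sub>R measure_pmf.expectation (f x) h)"
    by (rule pmf_expectation_bind) auto
  also have "\<dots> = measure_pmf.expectation p (\<lambda>x. measure_pmf.expectation (f x) h)"
    by (rule integral_measure_pmf[symmetric]) auto
  finally show ?thesis .
qed

lemma expectation_Pi_pmf_factor_coordinate:
  fixes \<mu> :: "'w::finite pmf" and a :: "'v::finite" and g :: "'w \<Rightarrow> ('v \<Rightarrow> 'w) \<Rightarrow> real"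
  assumes g_upd: "\<And>y R c. g y (R(a := c)) = g y R"
  shows "measure_pmf.expectation (Pi_pmf UNIV d (\<lambda>_. \<mu>)) (\<lambda>R. g (R a) R)
       = measure_pmf.expectation \<mu> (\<lambda>y. measure_pmf.expectation (Pi_pmf UNIV d (\<lambda>_. \<mu>)) (g y))"
proof -
  define Q where "Q = Pi_pmf (UNIV - {a}) d (\<lambda>_. \<mu>)"
  have split: "measure_pmf.expectation (Pi_pmf UNIV d (\<lambda>_. \<mu>)) G
      = measure_pmf.expectation \<mu> (\<lambda>y. measure_pmf.expectation Q (\<lambda>R. G (R(a := y))))"
    for G :: "('v \<Rightarrow> 'w) \<Rightarrow> real"
    using Pi_pmf_insert'[of "UNIV - {a}" a d "\<lambda>_. \<mu>"]
    by (simp add: insert_absorb Q_def expectation_bind_pmf_finite)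
  show ?thesis
    by (simp add: split g_upd)
qed

lemma deriv_at_fun_upd_self [simp]: "deriv_at Phi v u u' (x(v := c)) = deriv_at Phi v u u' x"
  by (simp add: deriv_at_def)

lemma deriv_at_diff: "deriv_at Phi v u u' x = deriv_at Phi v u u'' x - deriv_at Phi v u' u'' x"
  by (simp add: deriv_at_def)

lemma deriv_at_eq_if_uncorrelated:
  assumes "finite S" and "\<And>w. w \<in> S \<Longrightarrow> w \<noteq> v \<Longrightarrow> uncorrelated Phi v w"
    and "\<And>w. w \<notin> S \<Longrightarrow> x w = y w"
  shows "deriv_at Phi v u u' x = deriv_at Phi v u u' y"
  using assms
proof (induction S arbitrary: x rule: finite_induct)
  case empty
  then have "x = y" by auto
  then show ?case by simp
next
  case (insert w S)
  have "deriv_at Phi v u u' (x(w := y w)) = deriv_at Phi v u u' y"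
    using insert by (intro insert.IH) auto
  moreover have "deriv_at Phi v u u' (x(w := y w)) = deriv_at Phi v u u' x"
    using insert.prems(1)[of w] by (cases "w = v") (auto simp: uncorrelated_def)
  ultimately show ?case by simp
qed

lemma Phi_override_on_eq_sum_deriv_at:
  assumes "finite C" and "\<And>a b. a \<in> C \<Longrightarrow> b \<in> C \<Longrightarrow> a \<noteq> b \<Longrightarrow> uncorrelated Phi a b"
  shows "Phi (override_on x y C) - Phi x = (\<Sum>a\<in>C. deriv_at Phi a (y a) (x a) x)"
  using assms
proof (induction C rule: finite_induct)
  case empty
  then show ?case by simp
next
  case (insert a C)
  have "Phi (override_on x y (insert a C)) - Phi (override_on x y C)
      = deriv_at Phi a (y a) (x a) (override_on x y C)"
    using insert.hyps(2) by (simp add: override_on_insert deriv_at_def fun_upd_idem)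
  also have "\<dots> = deriv_at Phi a (y a) (x a) x"
    using insert by (intro deriv_at_eq_if_uncorrelated[of C]) auto
  finally show ?case
    using insert by simp
qed

lemma expectation_deriv_at_minimizer_nonpos:
  fixes \<mu> :: "'w::finite pmf" and a :: "'v::finite" and Z :: "('v \<Rightarrow> 'w) \<Rightarrow> 'v \<Rightarrow> 'w"
  assumes Z_upd: "\<And>R c. Z (R(a := c)) = (Z R)(a := c)"
    and minimizer: "\<And>u. measure_pmf.expectation (Pi_pmf UNIV d (\<lambda>_. \<mu>)) (\<lambda>R. deriv_at Phi a \<rho> u\<^sub>0 (Z R))
                      \<le> measure_pmf.expectation (Pi_pmf UNIV d (\<lambda>_. \<mu>)) (\<lambda>R. deriv_at Phi a u u\<^sub>0 (Z R))"
  shows "measure_pmf.expectation (Pi_pmf UNIV d (\<lambda>_. \<mu>)) (\<lambda>R. deriv_at Phi a \<rho> (R a) (Z R)) \<le> 0"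
proof -
  let ?P = "Pi_pmf UNIV d (\<lambda>_. \<mu>)"
  define h where "h u = measure_pmf.expectation ?P (\<lambda>R. deriv_at Phi a u u\<^sub>0 (Z R))" for u
  have "measure_pmf.expectation ?P (\<lambda>R. deriv_at Phi a \<rho> (R a) (Z R))
      = h \<rho> - measure_pmf.expectation ?P (\<lambda>R. deriv_at Phi a (R a) u\<^sub>0 (Z R))"
    unfolding h_def by (subst deriv_at_diff[where u'' = u\<^sub>0]) (simp add: Bochner_Integration.integral_diff)
  also have "measure_pmf.expectation ?P (\<lambda>R. deriv_at Phi a (R a) u\<^sub>0 (Z R))
      = measure_pmf.expectation \<mu> h"
    unfolding h_def by (rule expectation_Pi_pmf_factor_coordinate) (simp add: Z_upd)
  also have "h \<rho> \<le> measure_pmf.expectation \<mu> h"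
    using integral_mono[of "measure_pmf \<mu>" "\<lambda>_. h \<rho>" h] minimizer by (simp add: h_def)
  finally show ?thesis by simp
qed

text \<open>A local input is a triple (identifier, colour, derivative oracle).  In round n + 1 a vertex
  of colour n + 1 minimises its expected derivative, with the neighbours of colour at most n held
  at their chosen values and all other coordinates random; the reference value
  \<open>undefined\<close> of the derivative is arbitrary.\<close>

definition expected_deriv ::
  "'w pmf \<Rightarrow> ('v \<Rightarrow> 'v \<Rightarrow> bool) \<Rightarrow> ('v \<Rightarrow> 'v \<times> nat \<times> ('w \<Rightarrow> 'w \<Rightarrow> ('v \<Rightarrow> 'w) \<Rightarrow> real))
     \<Rightarrow> nat \<Rightarrow> ('v \<Rightarrow> 'w) \<Rightarrow> 'v \<Rightarrow> 'w \<Rightarrow> real" where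
  "expected_deriv \<mu> E inp n r v u = measure_pmf.expectation (Pi_pmf UNIV undefined (\<lambda>_. \<mu>))
     (\<lambda>R. snd (snd (inp v)) u undefined (\<lambda>w. if E v w \<and> fst (snd (inp w)) \<le> n then r w else R w))"

primrec greedy ::
  "nat \<Rightarrow> 'w pmf \<Rightarrow> ('v \<Rightarrow> 'v \<Rightarrow> bool) \<Rightarrow> ('v \<Rightarrow> 'v \<times> nat \<times> ('w \<Rightarrow> 'w \<Rightarrow> ('v \<Rightarrow> 'w) \<Rightarrow> real))
     \<Rightarrow> 'v \<Rightarrow> 'w" where
  "greedy 0 \<mu> E inp = (\<lambda>v. undefined)"
| "greedy (Suc n) \<mu> E inp = (\<lambda>v. if fst (snd (inp v)) = Suc n
     then arg_min_on (expected_deriv \<mu> E inp n (greedy n \<mu> E inp) v) UNIV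
     else greedy n \<mu> E inp v)"

lemma ball_of_self: "v \<in> ball_of E n v"
  by (induction n) auto

lemma ball_of_Suc_neighbour: "E v w \<Longrightarrow> ball_of E n w \<subseteq> ball_of E (Suc n) v"
proof (induction n)
  case 0
  then show ?case by auto
next
  case (Suc n)
  then show ?case by (simp only: ball_of.simps) blast
qed

lemma greedy_local:
  assumes "\<forall>u\<in>ball_of E n v. inp u = inp' u \<and> (\<forall>w. E u w = E' u w \<and> E w u = E' w u)"
  shows "greedy n \<mu> E inp v = greedy n \<mu> E' inp' v"
  using assms
proof (induction n arbitrary: v)
  case 0
  then show ?case by simp
next
  case (Suc n)
  have "inp v = inp' v \<and> (\<forall>w. E v w = E' v w \<and> E w v = E' w v)"
    using Suc.prems ball_of_self by (rule bspec)
  then have at_v: "inp v = inp' v" "E v = E' v"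
    by (auto simp: fun_eq_iff)
  have at_nb: "greedy n \<mu> E inp w = greedy n \<mu> E' inp' w \<and> inp w = inp' w" if "E v w" for w
  proof -
    have sub: "ball_of E n w \<subseteq> ball_of E (Suc n) v"
      using that by (rule ball_of_Suc_neighbour)
    then have "greedy n \<mu> E inp w = greedy n \<mu> E' inp' w"
      using Suc.prems sub by (intro Suc.IH) blast
    moreover have "inp w = inp' w"
      using Suc.prems subsetD[OF sub ball_of_self] by simp
    ultimately show ?thesis ..
  qed
  have "greedy n \<mu> E inp v = greedy n \<mu> E' inp' v"
    using Suc.prems by (intro Suc.IH) auto
  moreover have "(\<lambda>w. if E v w \<and> fst (snd (inp w)) \<le> n then greedy n \<mu> E inp w else R w)
      = (\<lambda>w. if E' v w \<and> fst (snd (inp' w)) \<le> n then greedy n \<mu> E' inp' w else R w)" for R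
    using at_nb by (auto simp: at_v(2)[symmetric] fun_eq_iff)
  then have "expected_deriv \<mu> E inp n (greedy n \<mu> E inp) v
      = expected_deriv \<mu> E' inp' n (greedy n \<mu> E' inp') v"
    unfolding expected_deriv_def at_v(1) by simp
  ultimately show ?case
    using at_v by simp
qed

lemma local_alg_greedy: "local_alg n (greedy n \<mu>)"
  unfolding local_alg_def by (blast intro: greedy_local)

locale derandomization =
  fixes \<mu> :: "'w::finite pmf" and E :: "'v::finite \<Rightarrow> 'v \<Rightarrow> bool"
    and chi :: "'v \<Rightarrow> nat" and Phi :: "('v \<Rightarrow> 'w) \<Rightarrow> real"
  assumes irrefl: "\<not> E v v"
    and uncorrelated_same_colour: "v \<noteq> w \<Longrightarrow> chi v = chi w \<Longrightarrow> uncorrelated Phi v w"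
    and deriv_at_local:
      "(\<And>w. w \<in> nbhd E v \<Longrightarrow> x w = y w) \<Longrightarrow> deriv_at Phi v u u' x = deriv_at Phi v u u' y"
begin

abbreviation random_config :: "('v \<Rightarrow> 'w) pmf" where
  "random_config \<equiv> Pi_pmf UNIV undefined (\<lambda>_. \<mu>)"

definition assignment :: "nat \<Rightarrow> 'v \<Rightarrow> 'w" where
  "assignment n = greedy n \<mu> E (\<lambda>v. (v, chi v, deriv_at Phi v))"

definition hybrid :: "nat \<Rightarrow> ('v \<Rightarrow> 'w) \<Rightarrow> 'v \<Rightarrow> 'w" where
  "hybrid n R = (\<lambda>w. if chi w \<le> n then assignment n w else R w)"

definition potential :: "nat \<Rightarrow> real" where
  "potential n = measure_pmf.expectation random_config (\<lambda>R. Phi (hybrid n R))"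

lemma assignment_Suc_other: "chi w \<noteq> Suc n \<Longrightarrow> assignment (Suc n) w = assignment n w"
  by (simp add: assignment_def)

lemma expectation_deriv_at_assignment_nonpos:
  assumes "chi a = Suc n"
  shows "measure_pmf.expectation random_config
           (\<lambda>R. deriv_at Phi a (assignment (Suc n) a) (R a) (hybrid n R)) \<le> 0"
proof -
  define Z where "Z R = (\<lambda>w. if E a w \<and> chi w \<le> n then assignment n w else R w)" for R :: "'v \<Rightarrow> 'w"
  have hybrid_to_Z: "deriv_at Phi a u u' (hybrid n R) = deriv_at Phi a u u' (Z R)" for u u' R
    using assms irrefl by (intro deriv_at_local) (auto simp: nbhd_def hybrid_def Z_def)
  have "assignment (Suc n) a = arg_min_on
          (\<lambda>u. measure_pmf.expectation random_config (\<lambda>R. deriv_at Phi a u undefined (Z R))) UNIV"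
    unfolding assignment_def Z_def using assms by (simp add: expected_deriv_def[abs_def])
  then have "measure_pmf.expectation random_config (\<lambda>R. deriv_at Phi a (assignment (Suc n) a) (R a) (Z R)) \<le> 0"
    by (intro expectation_deriv_at_minimizer_nonpos[where u\<^sub>0 = undefined])
       (auto simp: Z_def fun_eq_iff irrefl intro: arg_min_least)
  then show ?thesis
    by (simp add: hybrid_to_Z)
qed

lemma potential_Suc_le: "potential (Suc n) \<le> potential n"
proof -
  define C where "C = {w. chi w = Suc n}"
  have hybrid_Suc: "hybrid (Suc n) R = override_on (hybrid n R) (assignment (Suc n)) C" for R
    using assignment_Suc_other by (auto simp: hybrid_def C_def override_on_def fun_eq_iff)
  have "Phi (hybrid (Suc n) R) - Phi (hybrid n R)
      = (\<Sum>a\<in>C. deriv_at Phi a (assignment (Suc n) a) (R a) (hybrid n R))" for R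
    unfolding hybrid_Suc
    by (subst Phi_override_on_eq_sum_deriv_at)
       (auto simp: C_def hybrid_def uncorrelated_same_colour intro!: sum.cong)
  then have "potential (Suc n) - potential n
      = (\<Sum>a\<in>C. measure_pmf.expectation random_config
                    (\<lambda>R. deriv_at Phi a (assignment (Suc n) a) (R a) (hybrid n R)))"
    by (simp add: potential_def Bochner_Integration.integral_diff[symmetric] integral_sum[symmetric])
  also have "\<dots> \<le> 0"
    by (intro sum_nonpos expectation_deriv_at_assignment_nonpos) (simp add: C_def)
  finally show ?thesis by simp
qed

lemma assignment_le_expectation:
  assumes "\<And>v. chi v \<in> {1..k}"
  shows "Phi (assignment k) \<le> measure_pmf.expectation random_config Phi"
proof -
  have "chi v \<noteq> 0" and "chi v \<le> k" for v
    using assms[of v] by auto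
  then have "hybrid 0 R = R" and "hybrid k R = assignment k" for R
    by (auto simp: hybrid_def fun_eq_iff) (metis less_irrefl)
  moreover have "potential k \<le> potential 0"
    by (rule decseqD[OF decseq_SucI[of potential, OF potential_Suc_le]]) simp
  ultimately show ?thesis
    by (simp add: potential_def)
qed

end

theorem lemma3p1:
  fixes \<mu> :: "'w::finite pmf" and k :: nat
  shows "\<exists>T \<le> k. \<exists>A :: ('v::finite \<Rightarrow> 'v \<Rightarrow> bool)
                 \<Rightarrow> ('v \<Rightarrow> 'v \<times> nat \<times> ('w \<Rightarrow> 'w \<Rightarrow> ('v \<Rightarrow> 'w) \<Rightarrow> real)) \<Rightarrow> 'v \<Rightarrow> 'w.
     local_alg T A \<and>
     (\<forall>(E :: 'v \<Rightarrow> 'v \<Rightarrow> bool) (chi :: 'v \<Rightarrow> nat) (Phi :: ('v \<Rightarrow> 'w) \<Rightarrow> real).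
        (\<forall>v w. E v w \<longrightarrow> E w v) \<and> (\<forall>v. \<not> E v v) \<and>
        (\<forall>v. chi v \<in> {1..k}) \<and>
        (\<forall>v w. v \<noteq> w \<and> chi v = chi w \<longrightarrow> uncorrelated Phi v w) \<and>
        (\<forall>v u u' x y. (\<forall>w \<in> nbhd E v. x w = y w) \<longrightarrow> deriv_at Phi v u u' x = deriv_at Phi v u u' y)
        \<longrightarrow> Phi (A E (\<lambda>v. (v, chi v, deriv_at Phi v)))
              \<le> measure_pmf.expectation (Pi_pmf UNIV undefined (\<lambda>_. \<mu>)) Phi)"
proof (intro exI conjI allI impI)
  show "k \<le> k" and "local_alg k (greedy k \<mu>)"
    by (simp_all add: local_alg_greedy)
  fix E :: "'v \<Rightarrow> 'v \<Rightarrow> bool" and chi :: "'v \<Rightarrow> nat" and Phi :: "('v \<Rightarrow> 'w) \<Rightarrow> real"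
  assume hyps: "(\<forall>v w. E v w \<longrightarrow> E w v) \<and> (\<forall>v. \<not> E v v) \<and> (\<forall>v. chi v \<in> {1..k}) \<and>
    (\<forall>v w. v \<noteq> w \<and> chi v = chi w \<longrightarrow> uncorrelated Phi v w) \<and>
    (\<forall>v u u' x y. (\<forall>w \<in> nbhd E v. x w = y w) \<longrightarrow> deriv_at Phi v u u' x = deriv_at Phi v u u' y)"
  then interpret derandomization \<mu> E chi Phi
    by unfold_locales auto
  show "Phi (greedy k \<mu> E (\<lambda>v. (v, chi v, deriv_at Phi v))) \<le> measure_pmf.expectation random_config Phi"
    using assignment_le_expectation[of k] hyps by (simp add: assignment_def)
qed

end
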